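(* Let $G$ be an arbitrary group and let $S=\bigoplus_{g\in G}S_g$ be an epsilon-strongly $G$-graded ring with principal component $R=S_e$. If $\mathrm{Supp}(S)$ is finite, then $S$ is finitely generated both as a left $R$-module and as a right $R$-module.
   Context: All rings are associative with multiplicative identity $1\neq 0$. A ring $S$ is $G$-graded if $S=\bigoplus_{g\in G}S_g$ for additive subgroups $S_g$ with $S_gS_h\subseteq S_{gh}$ for all $g,h\in G$; $S_e$ is the principal component, and $\mathrm{Supp}(S)=\{g\in G: S_g\neq\{0\}\}$. $S$ is epsilon-strongly $G$-graded if (a) $S_gS_{g^{-1}}S_g=S_g$ for all $g\in G$, and (b) for each $g\in G$ the ideal $S_gS_{g^{-1}}$ of $S_e$ has a multiplicative identity. *)

theory Defs
  imports "HOL-Algebra.Group"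
begin

text \<open>The ring S is the whole type 'a (a ring with 1). A G-grading is given by a family
  Sg of subsets of S indexed by the elements of the group G (HOL-Algebra).\<close>

definition additive_subgroup :: "'a::ring_1 set \<Rightarrow> bool" where
  "additive_subgroup A \<longleftrightarrow> 0 \<in> A \<and> (\<forall>x\<in>A. \<forall>y\<in>A. x + y \<in> A) \<and> (\<forall>x\<in>A. - x \<in> A)"

definition subgroup_prod :: "'a::ring_1 set \<Rightarrow> 'a set \<Rightarrow> 'a set" where
  "subgroup_prod A B = {\<Sum>i<n. a i * b i | (n::nat) a b. \<forall>i<n. a i \<in> A \<and> b i \<in> B}"

definition graded_ring :: "('g, 'b) monoid_scheme \<Rightarrow> ('g \<Rightarrow> 'a::ring_1 set) \<Rightarrow> bool" where
  "graded_ring G Sg \<longleftrightarrow>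
     (\<forall>g\<in>carrier G. additive_subgroup (Sg g)) \<and>
     (\<forall>g\<in>carrier G. \<forall>h\<in>carrier G. \<forall>x\<in>Sg g. \<forall>y\<in>Sg h. x * y \<in> Sg (g \<otimes>\<^bsub>G\<^esub> h)) \<and>
     (\<forall>s::'a. \<exists>!f. (\<forall>g. g \<notin> carrier G \<longrightarrow> f g = 0) \<and> finite {g. f g \<noteq> 0} \<and>
                (\<forall>g\<in>carrier G. f g \<in> Sg g) \<and> s = (\<Sum>g\<in>{g. f g \<noteq> 0}. f g))"

definition support :: "('g, 'b) monoid_scheme \<Rightarrow> ('g \<Rightarrow> 'a::ring_1 set) \<Rightarrow> 'g set" where
  "support G Sg = {g \<in> carrier G. Sg g \<noteq> {0}}"

definition has_mult_identity :: "'a::ring_1 set \<Rightarrow> bool" where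
  "has_mult_identity I \<longleftrightarrow> (\<exists>e\<in>I. \<forall>x\<in>I. e * x = x \<and> x * e = x)"

definition epsilon_strongly_graded :: "('g, 'b) monoid_scheme \<Rightarrow> ('g \<Rightarrow> 'a::ring_1 set) \<Rightarrow> bool" where
  "epsilon_strongly_graded G Sg \<longleftrightarrow> graded_ring G Sg \<and>
     (\<forall>g\<in>carrier G. subgroup_prod (subgroup_prod (Sg g) (Sg (inv\<^bsub>G\<^esub> g))) (Sg g) = Sg g) \<and>
     (\<forall>g\<in>carrier G. has_mult_identity (subgroup_prod (Sg g) (Sg (inv\<^bsub>G\<^esub> g))))"

definition fin_gen_left_module :: "'a::ring_1 set \<Rightarrow> bool" where
  "fin_gen_left_module R \<longleftrightarrow> (\<exists>X. finite X \<and> (\<forall>s::'a. \<exists>c. (\<forall>x\<in>X. c x \<in> R) \<and> s = (\<Sum>x\<in>X. c x * x)))"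

definition fin_gen_right_module :: "'a::ring_1 set \<Rightarrow> bool" where
  "fin_gen_right_module R \<longleftrightarrow> (\<exists>X. finite X \<and> (\<forall>s::'a. \<exists>c. (\<forall>x\<in>X. c x \<in> R) \<and> s = (\<Sum>x\<in>X. x * c x)))"

end

theory Submission
  imports Defs
begin

text \<open>For g in the support, write the unit of S_g S_(g^-1) as a sum of products u_i v_i
  with u_i in S_g and v_i in S_(g^-1). Since S_g = S_g S_(g^-1) S_g, this unit fixes every s in S_g
  from the left, so s is the sum of the u_i (v_i s) with v_i s in S_e: the finitely many u_i
  generate S_g as a right S_e-module. Symmetrically, the unit of S_(g^-1) S_g fixes S_g from the
  right and yields left generators. As S is the sum of its finitely many nonzero components, the
  union of these generators generates S.\<close>

lemma subgroup_prod_elim: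
  assumes "x \<in> subgroup_prod A B"
  obtains n :: nat and a b where "\<forall>i<n. a i \<in> A \<and> b i \<in> B" "x = (\<Sum>i<n. a i * b i)"
  using assms unfolding subgroup_prod_def by blast

lemma subgroup_prod_mult_mem:
  assumes "a \<in> A" "b \<in> B"
  shows "a * b \<in> subgroup_prod A B"
  unfolding subgroup_prod_def
  using assms by (intro CollectI exI[of _ 1] exI[of _ "\<lambda>_. a"] exI[of _ "\<lambda>_. b"]) simp

lemma subgroup_prod_left_unit:
  fixes e :: "'a::ring_1"
  assumes unit: "\<forall>x\<in>subgroup_prod A B. e * x = x"
    and s: "s \<in> subgroup_prod (subgroup_prod A B) C"
  shows "e * s = s"
proof -
  obtain n :: nat and x z where xz: "\<forall>i<n. x i \<in> subgroup_prod A B \<and> z i \<in> C"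
    and s_eq: "s = (\<Sum>i<n. x i * z i)"
    using s by (rule subgroup_prod_elim)
  have "e * s = (\<Sum>i<n. (e * x i) * z i)"
    by (simp add: s_eq sum_distrib_left mult.assoc)
  also have "\<dots> = s"
    using xz unit by (simp add: s_eq)
  finally show ?thesis .
qed

lemma subgroup_prod_right_unit:
  fixes e :: "'a::ring_1"
  assumes unit: "\<forall>y\<in>subgroup_prod B C. y * e = y"
    and s: "s \<in> subgroup_prod (subgroup_prod A B) C"
  shows "s * e = s"
proof -
  have triple: "a * b * c * e = a * b * c" if "a \<in> A" "b \<in> B" "c \<in> C" for a b c
  proof -
    have "b * c * e = b * c"
      using unit subgroup_prod_mult_mem[of b B c C] that by blast
    then show ?thesis by (simp add: mult.assoc)
  qed
  have "x * c * e = x * c" if "x \<in> subgroup_prod A B" "c \<in> C" for x c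
  proof -
    obtain m :: nat and a b where ab: "\<forall>j<m. a j \<in> A \<and> b j \<in> B" and x_eq: "x = (\<Sum>j<m. a j * b j)"
      using \<open>x \<in> subgroup_prod A B\<close> by (rule subgroup_prod_elim)
    show ?thesis
      using ab triple \<open>c \<in> C\<close> by (simp add: x_eq sum_distrib_right)
  qed
  moreover obtain n :: nat and x z where "\<forall>i<n. x i \<in> subgroup_prod A B \<and> z i \<in> C"
    and "s = (\<Sum>i<n. x i * z i)"
    using s by (rule subgroup_prod_elim)
  ultimately show ?thesis
    by (simp add: sum_distrib_right)
qed

definition left_span :: "'a::ring_1 set \<Rightarrow> 'a set \<Rightarrow> 'a set" where
  "left_span R X = {s. \<exists>c. (\<forall>x\<in>X. c x \<in> R) \<and> s = (\<Sum>x\<in>X. c x * x)}"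

definition right_span :: "'a::ring_1 set \<Rightarrow> 'a set \<Rightarrow> 'a set" where
  "right_span R X = {s. \<exists>c. (\<forall>x\<in>X. c x \<in> R) \<and> s = (\<Sum>x\<in>X. x * c x)}"

lemma fin_gen_left_module_iff_left_span:
  "fin_gen_left_module R \<longleftrightarrow> (\<exists>X. finite X \<and> (\<forall>s. s \<in> left_span R X))"
  unfolding fin_gen_left_module_def left_span_def by simp

lemma fin_gen_right_module_iff_right_span:
  "fin_gen_right_module R \<longleftrightarrow> (\<exists>X. finite X \<and> (\<forall>s. s \<in> right_span R X))"
  unfolding fin_gen_right_module_def right_span_def by simp

lemma left_span_zero: "additive_subgroup R \<Longrightarrow> 0 \<in> left_span R X"
  unfolding left_span_def additive_subgroup_def by (intro CollectI exI[of _ "\<lambda>_. 0"]) simp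

lemma right_span_zero: "additive_subgroup R \<Longrightarrow> 0 \<in> right_span R X"
  unfolding right_span_def additive_subgroup_def by (intro CollectI exI[of _ "\<lambda>_. 0"]) simp

lemma left_span_add:
  assumes "additive_subgroup R" "s \<in> left_span R X" "t \<in> left_span R X"
  shows "s + t \<in> left_span R X"
proof -
  obtain c d where "\<forall>x\<in>X. c x \<in> R" "s = (\<Sum>x\<in>X. c x * x)" "\<forall>x\<in>X. d x \<in> R" "t = (\<Sum>x\<in>X. d x * x)"
    using assms(2,3) unfolding left_span_def by blast
  then show ?thesis
    using assms(1) unfolding left_span_def additive_subgroup_def
    by (intro CollectI exI[of _ "\<lambda>x. c x + d x"]) (simp add: sum.distrib distrib_right)
qed

lemma right_span_add:
  assumes "additive_subgroup R" "s \<in> right_span R X" "t \<in> right_span R X"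
  shows "s + t \<in> right_span R X"
proof -
  obtain c d where "\<forall>x\<in>X. c x \<in> R" "s = (\<Sum>x\<in>X. x * c x)" "\<forall>x\<in>X. d x \<in> R" "t = (\<Sum>x\<in>X. x * d x)"
    using assms(2,3) unfolding right_span_def by blast
  then show ?thesis
    using assms(1) unfolding right_span_def additive_subgroup_def
    by (intro CollectI exI[of _ "\<lambda>x. c x + d x"]) (simp add: sum.distrib distrib_left)
qed

lemma left_span_sum:
  assumes "additive_subgroup R" "\<forall>i\<in>I. f i \<in> left_span R X"
  shows "sum f I \<in> left_span R X"
  using assms(2)
proof (induction I rule: infinite_finite_induct)
  case (insert i I)
  then show ?case using left_span_add[OF assms(1)] by simp
qed (simp_all add: left_span_zero[OF assms(1)])

lemma right_span_sum:
  assumes "additive_subgroup R" "\<forall>i\<in>I. f i \<in> right_span R X"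
  shows "sum f I \<in> right_span R X"
  using assms(2)
proof (induction I rule: infinite_finite_induct)
  case (insert i I)
  then show ?case using right_span_add[OF assms(1)] by simp
qed (simp_all add: right_span_zero[OF assms(1)])

lemma left_span_mult_generator:
  assumes "additive_subgroup R" "finite X" "x \<in> X" "r \<in> R"
  shows "r * x \<in> left_span R X"
proof -
  have "(\<Sum>y\<in>X. (if y = x then r else 0) * y) = (\<Sum>y\<in>X. if y = x then r * x else 0)"
    by (rule sum.cong) auto
  also have "\<dots> = r * x"
    using assms(2,3) by simp
  finally show ?thesis
    using assms(1,4) unfolding left_span_def additive_subgroup_def
    by (intro CollectI exI[of _ "\<lambda>y. if y = x then r else 0"]) auto
qed

lemma right_span_mult_generator:
  assumes "additive_subgroup R" "finite X" "x \<in> X" "r \<in> R"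
  shows "x * r \<in> right_span R X"
proof -
  have "(\<Sum>y\<in>X. y * (if y = x then r else 0)) = (\<Sum>y\<in>X. if y = x then x * r else 0)"
    by (rule sum.cong) auto
  also have "\<dots> = x * r"
    using assms(2,3) by simp
  finally show ?thesis
    using assms(1,4) unfolding right_span_def additive_subgroup_def
    by (intro CollectI exI[of _ "\<lambda>y. if y = x then r else 0"]) auto
qed

lemma left_span_mono:
  assumes "additive_subgroup R" "X \<subseteq> Y" "finite Y"
  shows "left_span R X \<subseteq> left_span R Y"
proof
  fix s assume "s \<in> left_span R X"
  then obtain c where "\<forall>x\<in>X. c x \<in> R" "s = (\<Sum>x\<in>X. c x * x)"
    unfolding left_span_def by blast
  then show "s \<in> left_span R Y"
    using assms left_span_mult_generator[OF assms(1,3)] by (auto intro!: left_span_sum)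
qed

lemma right_span_mono:
  assumes "additive_subgroup R" "X \<subseteq> Y" "finite Y"
  shows "right_span R X \<subseteq> right_span R Y"
proof
  fix s assume "s \<in> right_span R X"
  then obtain c where "\<forall>x\<in>X. c x \<in> R" "s = (\<Sum>x\<in>X. x * c x)"
    unfolding right_span_def by blast
  then show "s \<in> right_span R Y"
    using assms right_span_mult_generator[OF assms(1,3)] by (auto intro!: right_span_sum)
qed

lemma graded_ring_sum_over_support:
  assumes "graded_ring G Sg" "finite (support G Sg)"
  obtains f where "\<forall>g\<in>support G Sg. f g \<in> Sg g" "s = (\<Sum>g\<in>support G Sg. f g)"
proof -
  obtain f where outside: "\<forall>g. g \<notin> carrier G \<longrightarrow> f g = 0" and homog: "\<forall>g\<in>carrier G. f g \<in> Sg g"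
    and s_eq: "s = (\<Sum>g\<in>{g. f g \<noteq> 0}. f g)"
    using assms(1) unfolding graded_ring_def by metis
  have "{g. f g \<noteq> 0} \<subseteq> support G Sg"
    using outside homog unfolding support_def by fastforce
  then have "s = (\<Sum>g\<in>support G Sg. f g)"
    unfolding s_eq using assms(2) by (intro sum.mono_neutral_left) auto
  moreover have "\<forall>g\<in>support G Sg. f g \<in> Sg g"
    using homog unfolding support_def by blast
  ultimately show ?thesis using that by blast
qed

lemma fin_gen_left_module_if_components:
  assumes "graded_ring G Sg" "finite (support G Sg)" "additive_subgroup R"
    and components: "\<forall>g\<in>support G Sg. \<exists>X. finite X \<and> Sg g \<subseteq> left_span R X"
  shows "fin_gen_left_module R"
proof -
  obtain X where fin: "\<forall>g\<in>support G Sg. finite (X g)" and sub: "\<forall>g\<in>support G Sg. Sg g \<subseteq> left_span R (X g)"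
    using components by metis
  define Y where "Y = (\<Union>g\<in>support G Sg. X g)"
  have "finite Y"
    unfolding Y_def using assms(2) fin by blast
  have "s \<in> left_span R Y" for s
  proof -
    obtain f where "\<forall>g\<in>support G Sg. f g \<in> Sg g" "s = (\<Sum>g\<in>support G Sg. f g)"
      using graded_ring_sum_over_support assms(1,2) by blast
    moreover have "left_span R (X g) \<subseteq> left_span R Y" if "g \<in> support G Sg" for g
      using left_span_mono[OF assms(3) _ \<open>finite Y\<close>] that unfolding Y_def by blast
    ultimately show ?thesis
      using sub by (auto intro!: left_span_sum[OF assms(3)] dest!: bspec)
  qed
  then show ?thesis
    unfolding fin_gen_left_module_iff_left_span using \<open>finite Y\<close> by blast
qed

lemma fin_gen_right_module_if_components:
  assumes "graded_ring G Sg" "finite (support G Sg)" "additive_subgroup R"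
    and components: "\<forall>g\<in>support G Sg. \<exists>X. finite X \<and> Sg g \<subseteq> right_span R X"
  shows "fin_gen_right_module R"
proof -
  obtain X where fin: "\<forall>g\<in>support G Sg. finite (X g)" and sub: "\<forall>g\<in>support G Sg. Sg g \<subseteq> right_span R (X g)"
    using components by metis
  define Y where "Y = (\<Union>g\<in>support G Sg. X g)"
  have "finite Y"
    unfolding Y_def using assms(2) fin by blast
  have "s \<in> right_span R Y" for s
  proof -
    obtain f where "\<forall>g\<in>support G Sg. f g \<in> Sg g" "s = (\<Sum>g\<in>support G Sg. f g)"
      using graded_ring_sum_over_support assms(1,2) by blast
    moreover have "right_span R (X g) \<subseteq> right_span R Y" if "g \<in> support G Sg" for g
      using right_span_mono[OF assms(3) _ \<open>finite Y\<close>] that unfolding Y_def by blast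
    ultimately show ?thesis
      using sub by (auto intro!: right_span_sum[OF assms(3)] dest!: bspec)
  qed
  then show ?thesis
    unfolding fin_gen_right_module_iff_right_span using \<open>finite Y\<close> by blast
qed

lemma graded_ring_principal_additive_subgroup:
  "group G \<Longrightarrow> graded_ring G Sg \<Longrightarrow> additive_subgroup (Sg \<one>\<^bsub>G\<^esub>)"
  unfolding graded_ring_def by (simp add: group.is_monoid monoid.one_closed)

lemma graded_ring_mult_mem:
  "graded_ring G Sg \<Longrightarrow> g \<in> carrier G \<Longrightarrow> h \<in> carrier G \<Longrightarrow> x \<in> Sg g \<Longrightarrow> y \<in> Sg h
    \<Longrightarrow> x * y \<in> Sg (g \<otimes>\<^bsub>G\<^esub> h)"
  unfolding graded_ring_def by blast

lemma epsilon_strongly_graded_component_right_span: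
  assumes G: "group G" and eps: "epsilon_strongly_graded G Sg" and g: "g \<in> carrier G"
  shows "\<exists>X. finite X \<and> Sg g \<subseteq> right_span (Sg \<one>\<^bsub>G\<^esub>) X"
proof -
  let ?g' = "inv\<^bsub>G\<^esub> g"
  have graded: "graded_ring G Sg"
    using eps unfolding epsilon_strongly_graded_def by blast
  have g': "?g' \<in> carrier G" and inv_mult: "?g' \<otimes>\<^bsub>G\<^esub> g = \<one>\<^bsub>G\<^esub>"
    using G g by (simp_all add: group.inv_closed group.l_inv)
  have R: "additive_subgroup (Sg \<one>\<^bsub>G\<^esub>)"
    using G graded by (rule graded_ring_principal_additive_subgroup)
  obtain e where "e \<in> subgroup_prod (Sg g) (Sg ?g')"
    and unit: "\<forall>x\<in>subgroup_prod (Sg g) (Sg ?g'). e * x = x"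
    using eps g unfolding epsilon_strongly_graded_def has_mult_identity_def by blast
  then obtain n :: nat and u v where uv: "\<forall>i<n. u i \<in> Sg g \<and> v i \<in> Sg ?g'"
    and e_eq: "e = (\<Sum>i<n. u i * v i)"
    by (elim subgroup_prod_elim)
  have "s \<in> right_span (Sg \<one>\<^bsub>G\<^esub>) (u ` {..<n})" if s: "s \<in> Sg g" for s
  proof -
    have "s \<in> subgroup_prod (subgroup_prod (Sg g) (Sg ?g')) (Sg g)"
      using eps g s unfolding epsilon_strongly_graded_def by blast
    then have "s = e * s"
      using subgroup_prod_left_unit[OF unit] by simp
    also have "\<dots> = (\<Sum>i<n. u i * (v i * s))"
      by (simp add: e_eq sum_distrib_right mult.assoc)
    finally have s_eq: "s = (\<Sum>i<n. u i * (v i * s))" .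
    have coeff: "v i * s \<in> Sg \<one>\<^bsub>G\<^esub>" if "i < n" for i
      using graded_ring_mult_mem[OF graded g' g] uv that s inv_mult by metis
    have "(\<Sum>i<n. u i * (v i * s)) \<in> right_span (Sg \<one>\<^bsub>G\<^esub>) (u ` {..<n})"
      using coeff by (auto intro!: right_span_sum[OF R] right_span_mult_generator[OF R])
    with s_eq show ?thesis by metis
  qed
  then show ?thesis by blast
qed

lemma epsilon_strongly_graded_component_left_span:
  assumes G: "group G" and eps: "epsilon_strongly_graded G Sg" and g: "g \<in> carrier G"
  shows "\<exists>X. finite X \<and> Sg g \<subseteq> left_span (Sg \<one>\<^bsub>G\<^esub>) X"
proof -
  let ?g' = "inv\<^bsub>G\<^esub> g"
  have graded: "graded_ring G Sg"
    using eps unfolding epsilon_strongly_graded_def by blast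
  have g': "?g' \<in> carrier G" and mult_inv: "g \<otimes>\<^bsub>G\<^esub> ?g' = \<one>\<^bsub>G\<^esub>"
    and inv_inv: "inv\<^bsub>G\<^esub> ?g' = g"
    using G g by (simp_all add: group.inv_closed group.r_inv group.inv_inv)
  have R: "additive_subgroup (Sg \<one>\<^bsub>G\<^esub>)"
    using G graded by (rule graded_ring_principal_additive_subgroup)
  obtain e where "e \<in> subgroup_prod (Sg ?g') (Sg g)"
    and unit: "\<forall>x\<in>subgroup_prod (Sg ?g') (Sg g). x * e = x"
    using eps g' inv_inv unfolding epsilon_strongly_graded_def has_mult_identity_def by metis
  then obtain n :: nat and p q where pq: "\<forall>i<n. p i \<in> Sg ?g' \<and> q i \<in> Sg g"
    and e_eq: "e = (\<Sum>i<n. p i * q i)"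
    by (elim subgroup_prod_elim)
  have "s \<in> left_span (Sg \<one>\<^bsub>G\<^esub>) (q ` {..<n})" if s: "s \<in> Sg g" for s
  proof -
    have "s \<in> subgroup_prod (subgroup_prod (Sg g) (Sg ?g')) (Sg g)"
      using eps g s unfolding epsilon_strongly_graded_def by blast
    then have "s = s * e"
      using subgroup_prod_right_unit[OF unit] by simp
    also have "\<dots> = (\<Sum>i<n. (s * p i) * q i)"
      by (simp add: e_eq sum_distrib_left mult.assoc)
    finally have s_eq: "s = (\<Sum>i<n. (s * p i) * q i)" .
    have coeff: "s * p i \<in> Sg \<one>\<^bsub>G\<^esub>" if "i < n" for i
      using graded_ring_mult_mem[OF graded g g'] pq that s mult_inv by metis
    have "(\<Sum>i<n. (s * p i) * q i) \<in> left_span (Sg \<one>\<^bsub>G\<^esub>) (q ` {..<n})"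
      using coeff by (auto intro!: left_span_sum[OF R] left_span_mult_generator[OF R])
    with s_eq show ?thesis by metis
  qed
  then show ?thesis by blast
qed

theorem proposition3p3:
  fixes G :: "('g, 'b) monoid_scheme" and Sg :: "'g \<Rightarrow> 'a::ring_1 set"
  assumes "group G"
    and "epsilon_strongly_graded G Sg"
    and "finite (support G Sg)"
  shows "fin_gen_left_module (Sg \<one>\<^bsub>G\<^esub>) \<and> fin_gen_right_module (Sg \<one>\<^bsub>G\<^esub>)"
proof -
  have graded: "graded_ring G Sg"
    using assms(2) unfolding epsilon_strongly_graded_def by blast
  have R: "additive_subgroup (Sg \<one>\<^bsub>G\<^esub>)"
    using assms(1) graded by (rule graded_ring_principal_additive_subgroup)
  have supp: "g \<in> carrier G" if "g \<in> support G Sg" for g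
    using that unfolding support_def by blast
  show ?thesis
    using fin_gen_left_module_if_components[OF graded assms(3) R]
      fin_gen_right_module_if_components[OF graded assms(3) R]
      epsilon_strongly_graded_component_left_span[OF assms(1,2) supp]
      epsilon_strongly_graded_component_right_span[OF assms(1,2) supp]
    by blast
qed

end
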